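(* Fix $a\in(0,1/2]$ and an integer $m\ge2$. Then \[ \lim_{n\to\infty}\overline{\Phi}_m(n;a)=\begin{cases}0, & m \text{ even},\\ \frac{1}{2a}-1, & m\text{ odd}.\end{cases} \]
   Context: For integers $n\ge1$, $k\in[0:n]$ and real $x$, the Krawtchouk polynomial is $K_k(x)=K_k^{(n)}(x):=\sum_{j=0}^{k}(-1)^{j}\binom{x}{j}\binom{n-x}{k-j}$, with generalized binomial coefficients. Here $[m:n]=\{m,\dots,n\}$. For $n\ge m$ and real $a\in(0,1/2]$, $\overline{\Phi}_m(n;a)$ is the optimal value of the linear program: maximize $-\sum_{k=1}^{n}\left[K_k(0)+\left(\frac1a-1\right)K_k(m)\right]x_k$ over $(x_1,\dots,x_n)\in\mathbb{R}^n$ subject to $x_k\ge0$ for $k\in[1:n]$ and $\sum_{k=1}^{n}[K_k(m)-K_k(i)]x_k\ge-1$ for all $i\in[1:m-1]\cup[m+1:n]$. *)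

theory Defs
  imports Complex_Main
begin

definition krawtchouk :: "nat \<Rightarrow> nat \<Rightarrow> real \<Rightarrow> real" where
  "krawtchouk n k x =
     (\<Sum>j=0..k. (-1) ^ j * (x gchoose j) * ((real n - x) gchoose (k - j)))"

definition phi_obj :: "nat \<Rightarrow> nat \<Rightarrow> real \<Rightarrow> (nat \<Rightarrow> real) \<Rightarrow> real" where
  "phi_obj m n a x =
     - (\<Sum>k=1..n. (krawtchouk n k 0 + (1 / a - 1) * krawtchouk n k (real m)) * x k)"

definition phi_feasible :: "nat \<Rightarrow> nat \<Rightarrow> (nat \<Rightarrow> real) set" where
  "phi_feasible m n =
     {x. (\<forall>k\<in>{1..n}. x k \<ge> 0) \<and>
         (\<forall>i\<in>{1..n} - {m}.
            (\<Sum>k=1..n. (krawtchouk n k (real m) - krawtchouk n k (real i)) * x k) \<ge> -1)}"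

definition PhiBar :: "nat \<Rightarrow> nat \<Rightarrow> real \<Rightarrow> real" where
  "PhiBar m n a = (SUP x\<in>phi_feasible m n. phi_obj m n a x)"

end

theory Submission
  imports Defs
begin

(* Counting k-subsets z of {0..<n} by |z \<inter> D| gives
     K_k(|D|) = (\<Sum> z. (-1)^|z \<inter> D|),
   so inequalities between Krawtchouk values follow from sums of squares: for L disjoint
   j-blocks B_t and p further points P,
     \<Sum> z. (1 + (-1)^|z \<inter> P|) * (\<Sum> t. (-1)^|z \<inter> B_t|)^2 \<ge> 0
   expands to L (K_k(0) + K_k(p)) + L (L - 1) (K_k(2j) + K_k(2j+p)) \<ge> 0, and L can be taken
   close to n/j.  For m = 2j (p = 0) this makes every objective coefficient nonpositive as
   soon as L > 1/a; since 0 is feasible the optimum is 0.  For m = 2j+1 (p = 1) it writes the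
   objective as minus a nonnegative combination of the constraint for i = 2j and of
   nonnegative coefficient vectors, bounding the optimum by (1/(2a) - 1)(1 + 1/(L - 2)),
   while x = e_n/2 attains 1/(2a) - 1 because K_n(i) = (-1)^i. *)


lemma card_subsets_with_card_Int:
  assumes "finite U" "D \<subseteq> U" "i \<le> k"
  shows "card {z. z \<subseteq> U \<and> card z = k \<and> card (z \<inter> D) = i}
       = (card D choose i) * ((card U - card D) choose (k - i))"
proof -
  let ?A = "{a. a \<subseteq> D \<and> card a = i}" and ?B = "{b. b \<subseteq> U - D \<and> card b = k - i}"
  have fin: "finite D" "finite (U - D)" using assms finite_subset by auto
  have "bij_betw (\<lambda>(a, b). a \<union> b) (?A \<times> ?B) {z. z \<subseteq> U \<and> card z = k \<and> card (z \<inter> D) = i}"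
  proof (rule bij_betw_byWitness[where f' = "\<lambda>z. (z \<inter> D, z - D)"])
    have "card (z - D) = card z - card (z \<inter> D)" if "z \<subseteq> U" for z
      using card_Int_Diff[of z D] finite_subset[OF that assms(1)] by simp
    then show "(\<lambda>z. (z \<inter> D, z - D)) ` {z. z \<subseteq> U \<and> card z = k \<and> card (z \<inter> D) = i} \<subseteq> ?A \<times> ?B"
      by auto
    have "card (a \<union> b) = card a + card b \<and> (a \<union> b) \<inter> D = a"
      if "a \<subseteq> D" "b \<subseteq> U - D" for a b
    proof
      show "card (a \<union> b) = card a + card b"
        using that finite_subset[OF that(1) fin(1)] finite_subset[OF that(2) fin(2)]
        by (intro card_Un_disjoint) auto
      show "(a \<union> b) \<inter> D = a" using that by blast
    qed
    then show "(\<lambda>(a, b). a \<union> b) ` (?A \<times> ?B) \<subseteq> {z. z \<subseteq> U \<and> card z = k \<and> card (z \<inter> D) = i}"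
      using assms by auto
    show "\<forall>p\<in>?A \<times> ?B. (\<lambda>z. (z \<inter> D, z - D)) ((\<lambda>(a, b). a \<union> b) p) = p"
      by blast
    show "\<forall>z\<in>{z. z \<subseteq> U \<and> card z = k \<and> card (z \<inter> D) = i}. (\<lambda>(a, b). a \<union> b) (z \<inter> D, z - D) = z"
      by blast
  qed
  then have "card {z. z \<subseteq> U \<and> card z = k \<and> card (z \<inter> D) = i} = card ?A * card ?B"
    by (simp add: bij_betw_same_card[symmetric] card_cartesian_product)
  also have "\<dots> = (card D choose i) * ((card U - card D) choose (k - i))"
    using fin assms by (simp add: n_subsets card_Diff_subset)
  finally show ?thesis .
qed

definition k_subsets :: "nat \<Rightarrow> nat \<Rightarrow> nat set set" where
  "k_subsets n k = {z. z \<subseteq> {..<n} \<and> card z = k}"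

definition parity_sign :: "nat set \<Rightarrow> nat set \<Rightarrow> real" where
  "parity_sign D z = (-1) ^ card (z \<inter> D)"

lemma finite_k_subsets: "finite (k_subsets n k)"
  unfolding k_subsets_def by (rule finite_subset[of _ "Pow {..<n}"]) auto

lemma card_k_subsets: "card (k_subsets n k) = n choose k"
  unfolding k_subsets_def using n_subsets[of "{..<n}" k] by simp

lemma krawtchouk_of_nat:
  assumes "d \<le> n"
  shows "krawtchouk n k (real d)
       = (\<Sum>i=0..k. (-1) ^ i * real (d choose i) * real ((n - d) choose (k - i)))"
  unfolding krawtchouk_def using assms by (simp add: binomial_gbinomial of_nat_diff)

lemma krawtchouk_eq_sum_parity_sign:
  assumes "D \<subseteq> {..<n}"
  shows "krawtchouk n k (real (card D)) = (\<Sum>z\<in>k_subsets n k. parity_sign D z)"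
proof -
  let ?Z = "\<lambda>i. {z \<in> k_subsets n k. card (z \<inter> D) = i}"
  have "card (z \<inter> D) \<in> {0..k}" if "z \<in> k_subsets n k" for z
    using that card_mono[of z "z \<inter> D"] finite_subset[of z "{..<n}"]
    unfolding k_subsets_def by auto
  then have "(\<Sum>z\<in>k_subsets n k. parity_sign D z) = (\<Sum>i=0..k. \<Sum>z\<in>?Z i. parity_sign D z)"
    by (intro sum.group[symmetric] finite_k_subsets) auto
  also have "\<dots> = (\<Sum>i=0..k. (-1) ^ i * real (card (?Z i)))"
    by (intro sum.cong refl) (simp add: parity_sign_def)
  also have "\<dots> = (\<Sum>i=0..k. (-1) ^ i * real (card D choose i) * real ((n - card D) choose (k - i)))"
  proof (intro sum.cong refl)
    fix i assume "i \<in> {0..k}"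
    then have "card (?Z i) = (card D choose i) * ((n - card D) choose (k - i))"
      using card_subsets_with_card_Int[of "{..<n}" D i k] assms
      unfolding k_subsets_def by (simp add: conj_assoc)
    then show "(-1) ^ i * real (card (?Z i))
             = (-1) ^ i * real (card D choose i) * real ((n - card D) choose (k - i))"
      by simp
  qed
  also have "\<dots> = krawtchouk n k (real (card D))"
    using card_mono[OF _ assms] by (simp add: krawtchouk_of_nat)
  finally show ?thesis ..
qed

lemma krawtchouk_at_0: "krawtchouk n k 0 = real (n choose k)"
  using krawtchouk_eq_sum_parity_sign[of "{}" n k]
  by (simp add: parity_sign_def card_k_subsets)

lemma abs_krawtchouk_le:
  assumes "d \<le> n"
  shows "\<bar>krawtchouk n k (real d)\<bar> \<le> real (n choose k)"
proof -
  have "\<bar>krawtchouk n k (real d)\<bar> = \<bar>\<Sum>z\<in>k_subsets n k. parity_sign {..<d} z\<bar>"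
    using krawtchouk_eq_sum_parity_sign[of "{..<d}" n k] assms by simp
  also have "\<dots> \<le> (\<Sum>z\<in>k_subsets n k. \<bar>parity_sign {..<d} z\<bar>)"
    by (rule sum_abs)
  also have "\<dots> = real (n choose k)"
    by (simp add: parity_sign_def card_k_subsets)
  finally show ?thesis .
qed

lemma krawtchouk_top:
  assumes "i \<le> n"
  shows "krawtchouk n n (real i) = (-1) ^ i"
proof -
  have "k_subsets n n = {{..<n}}"
    unfolding k_subsets_def using card_subset_eq[of "{..<n}"] by auto
  then show ?thesis
    using krawtchouk_eq_sum_parity_sign[of "{..<i}" n n] assms
    by (simp add: parity_sign_def Int_absorb1)
qed

lemma parity_sign_Un:
  assumes "finite z" "D \<inter> E = {}"
  shows "parity_sign (D \<union> E) z = parity_sign D z * parity_sign E z"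
proof -
  have "card (z \<inter> (D \<union> E)) = card (z \<inter> D) + card (z \<inter> E)"
    using assms by (simp add: Int_Un_distrib card_Un_disjoint disjoint_iff)
  then show ?thesis unfolding parity_sign_def by (simp add: power_add)
qed

lemma parity_sign_squared: "parity_sign D z * parity_sign D z = 1"
  unfolding parity_sign_def by (simp flip: power_add)

lemma parity_sign_ge: "-1 \<le> parity_sign D z"
  unfolding parity_sign_def by (cases "even (card (z \<inter> D))") auto

lemma parity_sign_correlation:
  assumes "P \<union> E \<subseteq> {..<n}" "P \<inter> E = {}"
  shows "(\<Sum>z\<in>k_subsets n k. (1 + parity_sign P z) * parity_sign E z)
       = krawtchouk n k (real (card E)) + krawtchouk n k (real (card P + card E))"
proof -
  have "finite P" "finite E" using assms finite_subset by auto
  then have card_PE: "card (P \<union> E) = card P + card E"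
    using assms(2) by (rule card_Un_disjoint)
  have "(1 + parity_sign P z) * parity_sign E z = parity_sign E z + parity_sign (P \<union> E) z"
    if "z \<in> k_subsets n k" for z
    using that assms finite_subset[of z "{..<n}"]
    by (simp add: k_subsets_def parity_sign_Un algebra_simps)
  then have "(\<Sum>z\<in>k_subsets n k. (1 + parity_sign P z) * parity_sign E z)
           = (\<Sum>z\<in>k_subsets n k. parity_sign E z) + (\<Sum>z\<in>k_subsets n k. parity_sign (P \<union> E) z)"
    by (simp add: sum.distrib)
  also have "\<dots> = krawtchouk n k (real (card E)) + krawtchouk n k (real (card P + card E))"
    using assms krawtchouk_eq_sum_parity_sign[of E n k] krawtchouk_eq_sum_parity_sign[of "P \<union> E" n k]
    by (simp add: card_PE)
  finally show ?thesis .
qed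

lemma Gram_sum_nonneg:
  fixes f :: "nat \<Rightarrow> 'a \<Rightarrow> real"
  assumes "\<And>z. z \<in> Z \<Longrightarrow> 0 \<le> w z"
    and corr: "\<And>t t'. t < L \<Longrightarrow> t' < L \<Longrightarrow>
      (\<Sum>z\<in>Z. w z * (f t z * f t' z)) = (if t = t' then A else B)"
  shows "0 \<le> real L * A + real L * (real L - 1) * B"
proof -
  have row: "(\<Sum>t'<L. if t = t' then A else B) = A + (real L - 1) * B" if "t < L" for t
  proof -
    have "(\<Sum>t'<L. if t = t' then A else B) = (\<Sum>t'<L. B + (if t = t' then A - B else 0))"
      by (intro sum.cong) auto
    also have "\<dots> = A + (real L - 1) * B"
      using that by (simp add: sum.distrib algebra_simps)
    finally show ?thesis .
  qed
  have "0 \<le> (\<Sum>z\<in>Z. w z * (\<Sum>t<L. f t z)\<^sup>2)"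
    using assms(1) by (intro sum_nonneg) simp
  also have "\<dots> = (\<Sum>z\<in>Z. \<Sum>t<L. \<Sum>t'<L. w z * (f t z * f t' z))"
    unfolding power2_eq_square sum_product by (simp add: sum_distrib_left)
  also have "\<dots> = (\<Sum>t<L. \<Sum>t'<L. \<Sum>z\<in>Z. w z * (f t z * f t' z))"
    by (subst sum.swap) (intro sum.cong refl sum.swap)
  also have "\<dots> = (\<Sum>t<L. A + (real L - 1) * B)"
    by (simp add: corr row)
  also have "\<dots> = real L * A + real L * (real L - 1) * B"
    by (simp add: algebra_simps)
  finally show ?thesis .
qed

definition block :: "nat \<Rightarrow> nat \<Rightarrow> nat \<Rightarrow> nat set" where
  "block p j t = {p + t * j ..< p + t * j + j}"

lemma card_block [simp]: "card (block p j t) = j"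
  by (simp add: block_def)

lemma finite_block [simp]: "finite (block p j t)"
  by (simp add: block_def)

lemma block_subset:
  assumes "t < L" "p + L * j \<le> n"
  shows "block p j t \<subseteq> {..<n}"
proof -
  have "t * j + j \<le> L * j"
    using mult_le_mono1[of "Suc t" L j] assms(1) by simp
  then show ?thesis using assms(2) by (auto simp: block_def)
qed

lemma disjoint_blocks:
  assumes "t \<noteq> t'"
  shows "block p j t \<inter> block p j t' = {}"
proof -
  have "block p j s \<inter> block p j s' = {}" if "s < s'" for s s'
  proof -
    have "s * j + j \<le> s' * j" using mult_le_mono1[of "Suc s" s' j] that by simp
    then show ?thesis by (auto simp: block_def)
  qed
  then show ?thesis using assms by (metis inf_commute linorder_neq_iff)
qed

lemma krawtchouk_block_inequality:
  assumes "p + L * j \<le> n"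
  shows "0 \<le> real L * (krawtchouk n k 0 + krawtchouk n k (real p))
            + real L * (real L - 1)
              * (krawtchouk n k (real (2 * j)) + krawtchouk n k (real (2 * j + p)))"
proof (rule Gram_sum_nonneg[where f = "\<lambda>t. parity_sign (block p j t)"])
  let ?P = "{..<p}"
  show "0 \<le> 1 + parity_sign ?P z" for z
    using parity_sign_ge[of ?P z] by simp
  fix t t' assume tt': "t < L" "t' < L"
  have P_block: "?P \<inter> block p j s = {}" for s
    by (auto simp: block_def)
  show "(\<Sum>z\<in>k_subsets n k. (1 + parity_sign ?P z)
          * (parity_sign (block p j t) z * parity_sign (block p j t') z))
      = (if t = t' then krawtchouk n k 0 + krawtchouk n k (real p)
         else krawtchouk n k (real (2 * j)) + krawtchouk n k (real (2 * j + p)))"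
  proof (cases "t = t'")
    case True
    then show ?thesis
      using parity_sign_correlation[of ?P "{}" n k] assms
      by (simp add: parity_sign_squared parity_sign_def)
  next
    case False
    let ?E = "block p j t \<union> block p j t'"
    have card_E: "card ?E = 2 * j"
      using disjoint_blocks[OF False] by (simp add: card_Un_disjoint)
    have "parity_sign (block p j t) z * parity_sign (block p j t') z = parity_sign ?E z"
      if "z \<in> k_subsets n k" for z
      using that finite_subset[of z "{..<n}"] disjoint_blocks[OF False]
      by (simp add: k_subsets_def parity_sign_Un)
    then have "(\<Sum>z\<in>k_subsets n k. (1 + parity_sign ?P z)
          * (parity_sign (block p j t) z * parity_sign (block p j t') z))
        = (\<Sum>z\<in>k_subsets n k. (1 + parity_sign ?P z) * parity_sign ?E z)"
      by (intro sum.cong) simp_all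
    also have "\<dots> = krawtchouk n k (real (2 * j)) + krawtchouk n k (real (2 * j + p))"
      using parity_sign_correlation[of ?P ?E n k] assms tt' P_block
        block_subset[OF tt'(1) assms] block_subset[OF tt'(2) assms]
      by (simp add: card_E Int_Un_distrib add.commute)
    finally show ?thesis using False by simp
  qed
qed

lemma krawtchouk_even_bound:
  assumes "L * j \<le> n" "0 \<le> c" "c \<le> real L - 1"
  shows "0 \<le> krawtchouk n k 0 + c * krawtchouk n k (real (2 * j))"
proof (cases "0 \<le> krawtchouk n k (real (2 * j))")
  case True
  then show ?thesis using assms(2) by (simp add: krawtchouk_at_0)
next
  case False
  have "0 \<le> 2 * real L * (krawtchouk n k 0 + (real L - 1) * krawtchouk n k (real (2 * j)))"
    using krawtchouk_block_inequality[of 0 L j n k] assms(1) by (simp add: algebra_simps)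
  moreover have "0 < real L" using assms by linarith
  ultimately have "0 \<le> krawtchouk n k 0 + (real L - 1) * krawtchouk n k (real (2 * j))"
    by (simp add: zero_le_mult_iff)
  moreover have "(real L - 1) * krawtchouk n k (real (2 * j)) \<le> c * krawtchouk n k (real (2 * j))"
    using False assms(3) by (intro mult_right_mono_neg) auto
  ultimately show ?thesis by linarith
qed

lemma krawtchouk_odd_bound:
  assumes "1 + L * j \<le> n" "0 < L"
  shows "0 \<le> (real L - 1) * (krawtchouk n k (real (2 * j)) + krawtchouk n k (real (2 * j + 1)))
            + 2 * krawtchouk n k 0"
proof -
  have "0 \<le> real L * ((krawtchouk n k 0 + krawtchouk n k 1)
      + (real L - 1) * (krawtchouk n k (real (2 * j)) + krawtchouk n k (real (2 * j + 1))))"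
    using krawtchouk_block_inequality[of 1 L j n k] assms(1) by (simp add: algebra_simps)
  then have "0 \<le> (krawtchouk n k 0 + krawtchouk n k 1)
      + (real L - 1) * (krawtchouk n k (real (2 * j)) + krawtchouk n k (real (2 * j + 1)))"
    using assms(2) by (simp add: zero_le_mult_iff)
  moreover have "krawtchouk n k 1 \<le> krawtchouk n k 0"
    using abs_krawtchouk_le[of 1 n k] assms(1) by (simp add: krawtchouk_at_0)
  ultimately show ?thesis by linarith
qed

lemma zero_in_phi_feasible: "(\<lambda>_. 0) \<in> phi_feasible m n"
  by (simp add: phi_feasible_def)

lemma PhiBar_le:
  assumes "\<And>x. x \<in> phi_feasible m n \<Longrightarrow> phi_obj m n a x \<le> B"
  shows "PhiBar m n a \<le> B"
  unfolding PhiBar_def using assms zero_in_phi_feasible by (intro cSUP_least) auto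

lemma phi_obj_le_PhiBar:
  assumes "\<And>x. x \<in> phi_feasible m n \<Longrightarrow> phi_obj m n a x \<le> B" "y \<in> phi_feasible m n"
  shows "phi_obj m n a y \<le> PhiBar m n a"
  unfolding PhiBar_def using assms by (intro cSUP_upper) (auto simp: bdd_above_def)

lemma feasible_sum_nonneg:
  assumes "x \<in> phi_feasible m n" "\<And>k. k \<in> {1..n} \<Longrightarrow> 0 \<le> g k"
  shows "0 \<le> (\<Sum>k=1..n. g k * x k)"
  using assms unfolding phi_feasible_def by (intro sum_nonneg mult_nonneg_nonneg) auto

lemma feasible_sum_ge:
  assumes x: "x \<in> phi_feasible m n" and i: "i \<in> {1..n}" "i \<noteq> m" and "0 \<le> \<beta>"
    and g: "\<And>k. k \<in> {1..n} \<Longrightarrow> \<beta> * (krawtchouk n k (real m) - krawtchouk n k (real i)) \<le> g k"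
  shows "- \<beta> \<le> (\<Sum>k=1..n. g k * x k)"
proof -
  have "- \<beta> \<le> \<beta> * (\<Sum>k=1..n. (krawtchouk n k (real m) - krawtchouk n k (real i)) * x k)"
    using x i \<open>0 \<le> \<beta>\<close> mult_left_mono[of "-1" _ \<beta>] unfolding phi_feasible_def by auto
  also have "\<dots> \<le> (\<Sum>k=1..n. g k * x k)"
    using x g unfolding phi_feasible_def sum_distrib_left
    by (intro sum_mono) (auto simp flip: mult.assoc intro: mult_right_mono)
  finally show ?thesis .
qed

lemma phi_obj_nonpos_even:
  assumes "0 < a" "a \<le> 1" "L * j \<le> n" "1 / a \<le> real L" "x \<in> phi_feasible (2 * j) n"
  shows "phi_obj (2 * j) n a x \<le> 0"
proof -
  have "0 \<le> 1 / a - 1" using assms by simp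
  with assms have "0 \<le> (\<Sum>k=1..n. (krawtchouk n k 0 + (1 / a - 1) * krawtchouk n k (real (2 * j))) * x k)"
    by (intro feasible_sum_nonneg krawtchouk_even_bound) auto
  then show ?thesis unfolding phi_obj_def by simp
qed

lemma phi_obj_le_odd:
  assumes "0 < a" "a \<le> 1/2" "1 + L * j \<le> n" "1 \<le> j" "1 / a \<le> real L - 1"
    and x: "x \<in> phi_feasible (2 * j + 1) n"
  shows "phi_obj (2 * j + 1) n a x \<le> (1 / (2 * a) - 1) * (1 + 1 / (real L - 2))"
proof -
  define c where "c = 1 / a - 1"
  define r where "r = real L - 2"
  define \<beta> where "\<beta> = (c - 1) / 2 * (1 + 1 / r)"
  have c: "1 \<le> c" "c \<le> r" using assms by (auto simp: c_def r_def field_simps)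
  then have r: "1 \<le> r" by linarith
  have "2 * j \<le> L * j" using r by (intro mult_le_mono1) (simp add: r_def)
  then have m_le: "2 * j + 1 \<le> n" using assms(3) by linarith
  have "- \<beta> \<le> (\<Sum>k=1..n. (krawtchouk n k 0 + c * krawtchouk n k (real (2 * j + 1))) * x k)"
  proof (rule feasible_sum_ge[OF x])
    show "2 * j \<in> {1..n}" using m_le assms(4) by simp
    show "0 \<le> \<beta>" using c r by (simp add: \<beta>_def)
    fix k
    let ?K0 = "krawtchouk n k 0" and ?E = "krawtchouk n k (real (2 * j))"
      and ?M = "krawtchouk n k (real (2 * j + 1))"
    have "?K0 + c * ?M - \<beta> * (?M - ?E)
        = (r + 1 - c) / r * (?K0 + ?M) + (c - 1) / (2 * r) * ((r + 1) * (?E + ?M) + 2 * ?K0)"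
      using r by (simp add: \<beta>_def field_simps)
    moreover have "0 \<le> ?K0 + ?M"
      using abs_krawtchouk_le[OF m_le, of k] by (simp add: krawtchouk_at_0)
    moreover have "0 \<le> (r + 1) * (?E + ?M) + 2 * ?K0"
      using krawtchouk_odd_bound[of L j n k] assms(3) r by (simp add: r_def)
    ultimately have "0 \<le> ?K0 + c * ?M - \<beta> * (?M - ?E)"
      using c r by (simp add: add_nonneg_nonneg)
    then show "\<beta> * (?M - ?E) \<le> ?K0 + c * ?M" by simp
  qed simp
  moreover have "\<beta> = (1 / (2 * a) - 1) * (1 + 1 / (real L - 2))"
    unfolding \<beta>_def c_def r_def by (simp add: field_simps)
  ultimately show ?thesis unfolding phi_obj_def c_def by simp
qed

lemma half_unit_vector_at_n:
  assumes "odd m" "m \<le> n"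
  shows "(\<lambda>k. if k = n then 1/2 else 0) \<in> phi_feasible m n"
    and "phi_obj m n a (\<lambda>k. if k = n then 1/2 else 0) = 1 / (2 * a) - 1"
proof -
  have n: "1 \<le> n" using assms by (cases m) auto
  have at_n: "(\<Sum>k=1..n. g k * (if k = n then 1/2 else 0)) = g n / 2" for g :: "nat \<Rightarrow> real"
    using n by (simp add: if_distrib sum.delta' cong: if_cong)
  have K_m: "krawtchouk n n (real m) = -1" using krawtchouk_top[OF assms(2)] assms(1) by simp
  show "(\<lambda>k. if k = n then 1/2 else 0) \<in> phi_feasible m n"
    unfolding phi_feasible_def
  proof (intro CollectI conjI ballI)
    fix i assume "i \<in> {1..n} - {m}"
    then have "krawtchouk n n (real i) \<le> 1"
      using krawtchouk_top[of i n] by (cases "even i") auto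
    then show "-1 \<le> (\<Sum>k=1..n. (krawtchouk n k (real m) - krawtchouk n k (real i))
                              * (if k = n then 1/2 else 0))"
      unfolding at_n K_m by simp
  qed simp
  show "phi_obj m n a (\<lambda>k. if k = n then 1/2 else 0) = 1 / (2 * a) - 1"
    using krawtchouk_top[of 0 n] unfolding phi_obj_def at_n K_m by (simp add: field_simps)
qed

lemma PhiBar_even_eventually_zero:
  assumes "0 < a" "a \<le> 1" "1 \<le> j"
  shows "eventually (\<lambda>n. PhiBar (2 * j) n a = 0) sequentially"
proof -
  have "filterlim (\<lambda>n. real (n div j)) at_top sequentially"
    using filterlim_at_top_div_const_nat[of j] assms(3)
    by (intro filterlim_compose[OF filterlim_real_sequentially]) simp
  then have "eventually (\<lambda>n. 1 / a \<le> real (n div j)) sequentially"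
    by (simp add: filterlim_at_top)
  then show ?thesis
  proof (rule eventually_mono)
    fix n assume L: "1 / a \<le> real (n div j)"
    have bound: "phi_obj (2 * j) n a x \<le> 0" if "x \<in> phi_feasible (2 * j) n" for x
      using assms L that by (intro phi_obj_nonpos_even[of _ "n div j" j]) auto
    have "0 \<le> PhiBar (2 * j) n a"
      using phi_obj_le_PhiBar[OF bound zero_in_phi_feasible] by (simp add: phi_obj_def)
    then show "PhiBar (2 * j) n a = 0" using PhiBar_le[OF bound] by simp
  qed
qed

lemma PhiBar_odd_tendsto:
  assumes "0 < a" "a \<le> 1/2" "1 \<le> j"
  shows "(\<lambda>n. PhiBar (2 * j + 1) n a) \<longlonglongrightarrow> 1 / (2 * a) - 1"
proof -
  define L where "L n = real ((n - 1) div j)" for n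
  define u where "u n = (1 / (2 * a) - 1) * (1 + 1 / (L n - 2))" for n
  have L_top: "filterlim L at_top sequentially"
    unfolding L_def using filterlim_at_top_div_const_nat[of j] assms(3)
    by (intro filterlim_compose[OF filterlim_real_sequentially]
          filterlim_compose[OF _ filterlim_minus_const_nat_at_top]) simp
  then have "filterlim (\<lambda>n. L n - 2) at_top sequentially"
    unfolding filterlim_at_top by (simp add: le_diff_eq)
  then have "(\<lambda>n. 1 / (L n - 2)) \<longlonglongrightarrow> 0"
    using tendsto_inverse_0_at_top by (simp add: inverse_eq_divide)
  then have "u \<longlonglongrightarrow> (1 / (2 * a) - 1) * (1 + 0)"
    unfolding u_def by (intro tendsto_intros)
  then have u: "u \<longlonglongrightarrow> 1 / (2 * a) - 1" by simp
  have "eventually (\<lambda>n. 1 / a \<le> L n - 1) sequentially"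
    using L_top by (simp add: filterlim_at_top le_diff_eq)
  moreover have "eventually (\<lambda>n. 2 * j + 1 \<le> n) sequentially"
    by (rule eventually_ge_at_top)
  ultimately have "eventually (\<lambda>n. 1 / (2 * a) - 1 \<le> PhiBar (2 * j + 1) n a
                                  \<and> PhiBar (2 * j + 1) n a \<le> u n) sequentially"
  proof eventually_elim
    case (elim n)
    have "1 + (n - 1) div j * j \<le> n"
      using div_times_less_eq_dividend[of "n - 1" j] elim by linarith
    then have bound: "phi_obj (2 * j + 1) n a x \<le> u n" if "x \<in> phi_feasible (2 * j + 1) n" for x
      using phi_obj_le_odd[OF assms(1,2) _ assms(3) _ that] elim unfolding u_def L_def by blast
    show ?case
      using phi_obj_le_PhiBar[OF bound half_unit_vector_at_n(1)] half_unit_vector_at_n(2) PhiBar_le[OF bound] elim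
      by simp
  qed
  then show ?thesis
    by (intro tendsto_sandwich[OF _ _ tendsto_const u]) (auto elim: eventually_mono)
qed

theorem theorem4:
  fixes a :: real and m :: nat
  assumes "0 < a" and "a \<le> 1/2" and "m \<ge> 2"
  shows "(\<lambda>n. PhiBar m n a) \<longlonglongrightarrow> (if even m then 0 else 1 / (2 * a) - 1)"
proof (cases "even m")
  case True
  then obtain j where "m = 2 * j" "1 \<le> j" using assms(3) by (auto elim!: evenE)
  then show ?thesis
    using PhiBar_even_eventually_zero[of a j] assms True by (simp add: tendsto_eventually)
next
  case False
  then obtain j where "m = 2 * j + 1" "1 \<le> j" using assms(3) by (auto elim!: oddE)
  then show ?thesis using PhiBar_odd_tendsto[of a j] assms False by simp
qed

end
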